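(* Let $\mathfrak{F}'$ be the set of maximal elements of $\mathfrak{F}\setminus\{\mathcal{F}_\infty\}$ and $\mathfrak{F}''$ the set of maximal elements of $\mathfrak{F}\setminus(\mathfrak{F}'\cup\{\mathcal{F}_\infty\})$. For a nonempty finite set $E\subseteq\mathbb{N}$, the filter $\mathcal{F}_E$ belongs to $\mathfrak{F}''$ if and only if one of the following holds: (1) there is an odd prime $p$ with $p\in\Pi_E$ and $A_E=\{2,p\}$; (2) there are two distinct odd primes $p,q$ with $A_E=\{2,p,q\}$ and $\Pi_E\subseteq\{2\}$.
   Context: $\mathbb{N}=\{1,2,\dots\}$, $\mathbb{N}_0=\{0\}\cup\mathbb{N}$, $\Pi$ the set of primes, $\Pi_z$ the set of prime divisors of $z$. The Kirch topology $\tau_K$ on $\mathbb{N}$ is generated by the base of all $a+b\mathbb{N}_0=\{a+bn:n\in\mathbb{N}_0\}$ with $a,b\in\mathbb{N}$ coprime and $b$ square-free. Closures $\overline{U}$ are in $\tau_K$; $\tau_x=\{U\in\tau_K:x\in U\}$. For finite $E\subseteq\mathbb{N}$, $\mathcal{F}_E=\{B\subseteq\mathbb{N}:\exists (U_x)_{x\in E}\in\prod_{x\in E}\tau_x\ (\bigcap_{x\in E}\overline{U_x}\subseteq B)\}$ (with $\mathcal{F}_\emptyset=\{\mathbb{N}\}$); $\mathcal{F}_\infty=\{B\subseteq\mathbb{N}:\exists n\in\mathbb{N}\ \exists U_1,\dots,U_n\in\tau_K\setminus\{\emptyset\}\ (\overline{U_1}\cap\dots\cap\overline{U_n}\subseteq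 B)\}$; $\mathfrak{F}=\{\mathcal{F}_E:E\subseteq\mathbb{N}\text{ finite}\}\cup\{\mathcal{F}_\infty\}$, ordered by inclusion. For nonempty finite $E$: $\Pi_E=\bigcap_{z\in E}\Pi_z$ and $A_E=\{p\in\Pi:\exists k\in\mathbb{N}\ (E\subseteq p\mathbb{Z}\cup(k+p\mathbb{Z}))\}$. *)

theory Defs
  imports "HOL-Computational_Algebra.Primes" "HOL-Computational_Algebra.Squarefree"
begin

text \<open>The positive integers N = {1,2,...} are modelled as the subset {0<..} of nat.\<close>

definition arith_prog :: "nat \<Rightarrow> nat \<Rightarrow> nat set" where
  "arith_prog a b = {a + b * n | n. True}"

definition kirch_basic :: "nat set \<Rightarrow> bool" where
  "kirch_basic S \<longleftrightarrow> (\<exists>a b. 0 < a \<and> 0 < b \<and> coprime a b \<and> squarefree b \<and> S = arith_prog a b)"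

definition kirch_open :: "nat set \<Rightarrow> bool" where
  "kirch_open U \<longleftrightarrow> U \<subseteq> {0<..} \<and> (\<forall>x\<in>U. \<exists>S. kirch_basic S \<and> x \<in> S \<and> S \<subseteq> U)"

definition kirch_closure :: "nat set \<Rightarrow> nat set" where
  "kirch_closure A = {x \<in> {0<..}. \<forall>V. kirch_open V \<and> x \<in> V \<longrightarrow> V \<inter> A \<noteq> {}}"

definition filt :: "nat set \<Rightarrow> nat set set" where
  "filt E = {B. B \<subseteq> {0<..} \<and> (\<exists>U. (\<forall>x\<in>E. kirch_open (U x) \<and> x \<in> U x) \<and>
                 {0<..} \<inter> (\<Inter>x\<in>E. kirch_closure (U x)) \<subseteq> B)}"

definition filt_inf :: "nat set set" where
  "filt_inf = {B. B \<subseteq> {0<..} \<and> (\<exists>\<U>. finite \<U> \<and> \<U> \<noteq> {} \<and>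
                 (\<forall>U\<in>\<U>. kirch_open U \<and> U \<noteq> {}) \<and> (\<Inter>U\<in>\<U>. kirch_closure U) \<subseteq> B)}"

definition filt_family :: "nat set set set" where
  "filt_family = {filt E | E. finite E \<and> E \<subseteq> {0<..}} \<union> {filt_inf}"

definition maximals :: "'a set set \<Rightarrow> 'a set set" where
  "maximals S = {F \<in> S. \<forall>G\<in>S. F \<subseteq> G \<longrightarrow> G = F}"

definition F1 :: "nat set set set" where
  "F1 = maximals (filt_family - {filt_inf})"

definition F2 :: "nat set set set" where
  "F2 = maximals (filt_family - (F1 \<union> {filt_inf}))"

definition Pi_E :: "nat set \<Rightarrow> nat set" where
  "Pi_E E = (\<Inter>z\<in>E. prime_factors z)"

definition A_E :: "nat set \<Rightarrow> nat set" where
  "A_E E = {p. prime p \<and> (\<exists>k>0. \<forall>z\<in>E. p dvd z \<or> z mod p = k mod p)}"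

end

(*
  The Kirch closure of a basic set a + b N_0 consists of the y > 0 that, at each prime p dividing b,
  are divisible by p or congruent to a mod p. Hence F_E is generated by the sets of y > 0 that are
  compatible with E modulo finitely many primes p (each x in E is divisible by p, or y is, or
  y = x mod p), F_E is contained in F_E' exactly when, prime by prime, compatibility with E' implies
  compatibility with E, and F_inf = F_{1,2}.

  At an odd prime p the y compatible with E are: all y (p in Pi_E); the multiples of p together with
  one nonzero residue class (p in A_E but not in Pi_E); or the multiples of p alone (p not in A_E).
  Comparing these local types shows that F' consists of the F_E with A_E = {2, p}, p odd and not in
  Pi_E. For the next layer, the progression {z, z + m, z + 2 m} copies a prescribed type at the
  primes dividing m and admits only multiples of q at every other odd prime q; a member of F'' lies
  below the progression copying its type at one or two primes of A_E, and maximality forces equality.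
*)
theory Submission
  imports Defs "HOL-Number_Theory.Cong"
begin

section \<open>Closures of arithmetic progressions\<close>

lemma mem_arith_prog_iff: "x \<in> arith_prog a b \<longleftrightarrow> a \<le> x \<and> [x = a] (mod b)"
  unfolding arith_prog_def by (auto simp: cong_le_nat mult.commute)

lemma cong_of_mem_arith_prog: "x \<in> arith_prog a b \<Longrightarrow> p dvd b \<Longrightarrow> [x = a] (mod p)"
  by (auto simp: mem_arith_prog_iff intro: cong_dvd_modulus_nat)

lemma kirch_open_arith_prog:
  assumes "0 < a" "0 < b" "coprime a b" "squarefree b"
  shows "kirch_open (arith_prog a b)"
  using assms unfolding kirch_open_def kirch_basic_def by (auto simp: arith_prog_def)

lemma kirch_closure_mono: "A \<subseteq> B \<Longrightarrow> kirch_closure A \<subseteq> kirch_closure B"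
  unfolding kirch_closure_def by blast

lemma cong_squarefree_modulus:
  fixes n x y :: nat
  assumes "squarefree n" and "\<And>p. prime p \<Longrightarrow> p dvd n \<Longrightarrow> [x = y] (mod p)"
  shows "[x = y] (mod n)"
proof -
  have "n \<noteq> 0" using assms(1) by (metis not_squarefree_0)
  have "n = (\<Prod>p\<in>prime_factors n. p ^ multiplicity p n)"
    using prod_prime_factors[OF \<open>n \<noteq> 0\<close>] by simp
  also have "\<dots> = (\<Prod>p\<in>prime_factors n. p)"
    using assms(1) \<open>n \<noteq> 0\<close> by (intro prod.cong) (auto simp: squarefree_factorial_semiring')
  finally have n: "n = (\<Prod>p\<in>prime_factors n. p)" .
  have "[x = y] (mod (\<Prod>p\<in>prime_factors n. p))"
    by (rule coprime_cong_prod_nat) (auto intro: primes_coprime assms(2) simp: in_prime_factors_iff)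
  with n show ?thesis by simp
qed

lemma arith_prog_inter_nonempty:
  assumes "0 < b" "0 < d" "squarefree b" "squarefree d"
    and "\<And>r. prime r \<Longrightarrow> r dvd b \<Longrightarrow> r dvd d \<Longrightarrow> [a = c] (mod r)"
  shows "arith_prog a b \<inter> arith_prog c d \<noteq> {}"
proof -
  define u where "u r = (if r dvd b then a else c)" for r
  obtain z where z: "\<forall>r\<in>prime_factors (b * d). [z = u r] (mod id r)"
    using chinese_remainder_nat[of "prime_factors (b * d)" id u]
    by (auto intro: primes_coprime simp: in_prime_factors_iff)
  have z_r: "[z = u r] (mod r)" if "prime r" "r dvd b * d" for r
    using z that assms(1,2) by (simp add: in_prime_factors_iff)
  have "[z = a] (mod b)"
  proof (rule cong_squarefree_modulus[OF assms(3)])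
    fix r assume "prime r" "r dvd b"
    then show "[z = a] (mod r)" using z_r[of r] by (simp add: u_def)
  qed
  moreover have "[z = c] (mod d)"
  proof (rule cong_squarefree_modulus[OF assms(4)])
    fix r assume r: "prime r" "r dvd d"
    show "[z = c] (mod r)"
    proof (cases "r dvd b")
      case True
      then have "[z = a] (mod r)" using z_r[of r] r by (simp add: u_def)
      then show ?thesis using assms(5) r True by (blast intro: cong_trans)
    next
      case False
      then show ?thesis using z_r[of r] r by (simp add: u_def)
    qed
  qed
  moreover have "[z + b * d * (a + c) = z] (mod b)" "[z + b * d * (a + c) = z] (mod d)"
    unfolding cong_add_lcancel_0_nat by (simp_all add: cong_0_iff)
  moreover have "a + c \<le> b * d * (a + c)"
    using assms(1,2) by simp
  then have "a \<le> z + b * d * (a + c)" "c \<le> z + b * d * (a + c)"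
    by linarith+
  ultimately have "z + b * d * (a + c) \<in> arith_prog a b" "z + b * d * (a + c) \<in> arith_prog c d"
    unfolding mem_arith_prog_iff by (blast intro: cong_trans)+
  then show ?thesis by blast
qed

lemma cong_of_mem_kirch_closure:
  assumes "y \<in> kirch_closure (arith_prog a b)" "prime p" "p dvd b" "\<not> p dvd y"
  shows "[y = a] (mod p)"
proof -
  have "0 < y" using assms(1) unfolding kirch_closure_def by simp
  moreover have "coprime y p" using assms(2,4) prime_imp_coprime coprime_commute by blast
  ultimately have "kirch_open (arith_prog y p)"
    using assms(2) by (intro kirch_open_arith_prog) (auto simp: squarefree_prime prime_gt_0_nat)
  moreover have "y \<in> arith_prog y p" by (simp add: mem_arith_prog_iff)
  ultimately obtain z where "z \<in> arith_prog y p" "z \<in> arith_prog a b"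
    using assms(1) unfolding kirch_closure_def by blast
  then have "[z = y] (mod p)" "[z = a] (mod p)"
    using assms(3) by (auto intro: cong_of_mem_arith_prog)
  then show ?thesis by (blast intro: cong_trans cong_sym)
qed

lemma mem_kirch_closure_arith_prog:
  assumes "0 < y" "squarefree b"
    and "\<And>p. prime p \<Longrightarrow> p dvd b \<Longrightarrow> \<not> p dvd y \<Longrightarrow> [y = a] (mod p)"
  shows "y \<in> kirch_closure (arith_prog a b)"
  unfolding kirch_closure_def
proof (intro CollectI conjI allI impI)
  show "y \<in> {0<..}" using assms(1) by simp
  fix V assume "kirch_open V \<and> y \<in> V"
  then obtain c d where cd: "0 < d" "coprime c d" "squarefree d" "y \<in> arith_prog c d"
    "arith_prog c d \<subseteq> V"
    unfolding kirch_open_def kirch_basic_def by blast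
  have "arith_prog a b \<inter> arith_prog c d \<noteq> {}"
  proof (rule arith_prog_inter_nonempty)
    show "0 < b" using assms(2) by (metis gr0I not_squarefree_0)
    fix r assume r: "prime r" "r dvd b" "r dvd d"
    have "[y = c] (mod r)" using cd(4) r(3) by (rule cong_of_mem_arith_prog)
    moreover have "\<not> r dvd c" using cd(2) r by (metis coprime_common_divisor not_prime_unit)
    ultimately have "\<not> r dvd y" using cong_dvd_iff by blast
    with \<open>[y = c] (mod r)\<close> show "[a = c] (mod r)"
      using assms(3) r by (blast intro: cong_trans cong_sym)
  qed (use cd assms(2) in auto)
  then show "V \<inter> arith_prog a b \<noteq> {}" using cd(5) by blast
qed

section \<open>The filters F_E described by congruences\<close>

(* For p not dividing x, compatible_mod {x} p y says that y lies in the Kirch closure of x + p N_0. *)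
definition compatible_mod :: "nat set \<Rightarrow> nat \<Rightarrow> nat \<Rightarrow> bool" where
  "compatible_mod E p y \<longleftrightarrow> (\<forall>x\<in>E. p dvd x \<or> p dvd y \<or> [y = x] (mod p))"

definition compatible_set :: "nat set \<Rightarrow> nat set \<Rightarrow> nat set" where
  "compatible_set E P = {y. 0 < y \<and> (\<forall>p\<in>P. compatible_mod E p y)}"

lemma compatible_mod_singleton:
  "compatible_mod {x} p y \<longleftrightarrow> p dvd x \<or> p dvd y \<or> [y = x] (mod p)"
  by (simp add: compatible_mod_def)

lemma compatible_mod_dvd: "p dvd y \<Longrightarrow> compatible_mod E p y"
  by (simp add: compatible_mod_def)

lemma compatible_mod_cong:
  "[y = y'] (mod p) \<Longrightarrow> compatible_mod E p y \<longleftrightarrow> compatible_mod E p y'"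
  unfolding compatible_mod_def using cong_dvd_iff by (blast intro: cong_trans cong_sym)

lemma compatible_mod_two: "compatible_mod E 2 y"
  by (auto simp: compatible_mod_def cong_def odd_iff_mod_2_eq_one)

lemma compatible_mod_one_two_iff:
  assumes "prime p"
  shows "compatible_mod {1, 2} p y \<longleftrightarrow> p = 2 \<or> p dvd y"
proof
  assume *: "compatible_mod {1, 2} p y"
  show "p = 2 \<or> p dvd y"
  proof (rule ccontr)
    assume "\<not> (p = 2 \<or> p dvd y)"
    then have "2 < p" "\<not> p dvd y" using prime_ge_2_nat[OF assms] by auto
    then have "[y = 1] (mod p)" "[y = 2] (mod p)"
      using * by (auto simp: compatible_mod_def dest: dvd_imp_le)
    then show False using \<open>2 < p\<close> by (auto simp: cong_def)
  qed
qed (auto intro: compatible_mod_two compatible_mod_dvd)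

lemma compatible_mod_if_one_two:
  "prime p \<Longrightarrow> compatible_mod {1, 2} p y \<Longrightarrow> compatible_mod E p y"
  using compatible_mod_one_two_iff compatible_mod_two compatible_mod_dvd by blast

lemma compatible_set_antimono:
  "A \<subseteq> E \<Longrightarrow> P \<subseteq> P' \<Longrightarrow> compatible_set E P' \<subseteq> compatible_set A P"
  unfolding compatible_set_def compatible_mod_def by blast

lemma compatible_set_Un: "compatible_set (A \<union> B) P = compatible_set A P \<inter> compatible_set B P"
  unfolding compatible_set_def compatible_mod_def by blast

lemma compatible_set_eq_INT: "compatible_set E P = {0<..} \<inter> (\<Inter>x\<in>E. compatible_set {x} P)"
  unfolding compatible_set_def compatible_mod_def by auto

lemma compatible_set_one_two_subset:
  "\<forall>p\<in>P. prime p \<Longrightarrow> compatible_set {1, 2} P \<subseteq> compatible_set E P"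
  unfolding compatible_set_def using compatible_mod_if_one_two by blast

lemma kirch_closure_superset_compatible_set:
  assumes "kirch_open U" "x \<in> U"
  shows "\<exists>P. finite P \<and> (\<forall>p\<in>P. prime p) \<and> compatible_set {x} P \<subseteq> kirch_closure U"
proof -
  obtain a b where ab: "0 < a" "coprime a b" "squarefree b" "x \<in> arith_prog a b"
    "arith_prog a b \<subseteq> U"
    using assms unfolding kirch_open_def kirch_basic_def by blast
  have "compatible_set {x} (prime_factors b) \<subseteq> kirch_closure (arith_prog a b)"
  proof
    fix y assume y: "y \<in> compatible_set {x} (prime_factors b)"
    show "y \<in> kirch_closure (arith_prog a b)"
    proof (rule mem_kirch_closure_arith_prog[OF _ ab(3)])
      show "0 < y" using y by (simp add: compatible_set_def)
      fix p assume p: "prime p" "p dvd b" "\<not> p dvd y"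
      have "[x = a] (mod p)" using ab(4) p(2) by (rule cong_of_mem_arith_prog)
      moreover have "\<not> p dvd a" using ab(2) p(1,2) by (metis coprime_common_divisor not_prime_unit)
      ultimately have "\<not> p dvd x" using cong_dvd_iff by blast
      with y p have "[y = x] (mod p)"
        using ab(3) by (auto simp: compatible_set_def compatible_mod_singleton in_prime_factors_iff)
      with \<open>[x = a] (mod p)\<close> show "[y = a] (mod p)" by (blast intro: cong_trans)
    qed
  qed
  also have "\<dots> \<subseteq> kirch_closure U" using ab(5) by (rule kirch_closure_mono)
  finally show ?thesis by (intro exI[of _ "prime_factors b"]) (auto simp: in_prime_factors_iff)
qed

lemma kirch_nbhd_closure_subset_compatible_set:
  assumes "0 < x" "finite P" "\<forall>p\<in>P. prime p"
  shows "\<exists>U. kirch_open U \<and> x \<in> U \<and> kirch_closure U \<subseteq> compatible_set {x} P"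
proof (intro exI conjI)
  define b where "b = \<Prod>{p\<in>P. \<not> p dvd x}"
  have "0 < b" unfolding b_def using assms(3) by (auto intro!: prod_pos simp: prime_gt_0_nat)
  moreover have "coprime x b"
    unfolding b_def using assms(3) by (auto intro!: prod_coprime_right simp: prime_imp_coprime coprime_commute)
  moreover have "squarefree b"
    unfolding b_def using assms(2,3)
    by (intro squarefree_prod_coprime) (auto intro: primes_coprime squarefree_prime)
  ultimately show "kirch_open (arith_prog x b)" using assms(1) by (simp add: kirch_open_arith_prog)
  show "x \<in> arith_prog x b" by (simp add: mem_arith_prog_iff)
  show "kirch_closure (arith_prog x b) \<subseteq> compatible_set {x} P"
  proof
    fix y assume y: "y \<in> kirch_closure (arith_prog x b)"
    have "compatible_mod {x} p y" if "p \<in> P" for p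
    proof (cases "p dvd x \<or> p dvd y")
      case False
      then have "p dvd b" unfolding b_def using that assms(2) by (intro dvd_prodI) auto
      then show ?thesis
        using cong_of_mem_kirch_closure[OF y] assms(3) that False by (simp add: compatible_mod_singleton)
    qed (auto simp: compatible_mod_singleton)
    moreover have "0 < y" using y unfolding kirch_closure_def by simp
    ultimately show "y \<in> compatible_set {x} P" by (simp add: compatible_set_def)
  qed
qed

lemma mem_filt_iff:
  assumes "finite E" "E \<subseteq> {0<..}"
  shows "B \<in> filt E \<longleftrightarrow>
    B \<subseteq> {0<..} \<and> (\<exists>P. finite P \<and> (\<forall>p\<in>P. prime p) \<and> compatible_set E P \<subseteq> B)"
proof
  assume "B \<in> filt E"
  then obtain U where B: "B \<subseteq> {0<..}" and U: "\<forall>x\<in>E. kirch_open (U x) \<and> x \<in> U x"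
    and sub: "{0<..} \<inter> (\<Inter>x\<in>E. kirch_closure (U x)) \<subseteq> B"
    unfolding filt_def by blast
  have "\<forall>x\<in>E. \<exists>P. finite P \<and> (\<forall>p\<in>P. prime p) \<and>
      compatible_set {x} P \<subseteq> kirch_closure (U x)"
    using kirch_closure_superset_compatible_set U by blast
  then obtain P where P: "\<forall>x\<in>E. finite (P x) \<and> (\<forall>p\<in>P x. prime p) \<and>
      compatible_set {x} (P x) \<subseteq> kirch_closure (U x)"
    by (rule bchoice[THEN exE]) blast
  have "compatible_set E (\<Union>x\<in>E. P x) \<subseteq> kirch_closure (U x)" if "x \<in> E" for x
  proof -
    have "compatible_set E (\<Union>x\<in>E. P x) \<subseteq> compatible_set {x} (P x)"
      using that by (intro compatible_set_antimono) auto
    with P that show ?thesis by blast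
  qed
  moreover have "compatible_set E (\<Union>x\<in>E. P x) \<subseteq> {0<..}"
    by (auto simp: compatible_set_def)
  ultimately have "compatible_set E (\<Union>x\<in>E. P x) \<subseteq> B" using sub by blast
  with B P assms(1) show "B \<subseteq> {0<..} \<and>
      (\<exists>P. finite P \<and> (\<forall>p\<in>P. prime p) \<and> compatible_set E P \<subseteq> B)"
    by (intro conjI exI[of _ "\<Union>x\<in>E. P x"]) auto
next
  assume "B \<subseteq> {0<..} \<and> (\<exists>P. finite P \<and> (\<forall>p\<in>P. prime p) \<and> compatible_set E P \<subseteq> B)"
  then obtain P where B: "B \<subseteq> {0<..}" and P: "finite P" "\<forall>p\<in>P. prime p" "compatible_set E P \<subseteq> B"
    by blast
  have "\<forall>x\<in>E. \<exists>U. kirch_open U \<and> x \<in> U \<and> kirch_closure U \<subseteq> compatible_set {x} P"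
    using kirch_nbhd_closure_subset_compatible_set[OF _ P(1,2)] assms(2) by blast
  then obtain U where U: "\<forall>x\<in>E. kirch_open (U x) \<and> x \<in> U x \<and> kirch_closure (U x) \<subseteq> compatible_set {x} P"
    by (rule bchoice[THEN exE]) blast
  then have "{0<..} \<inter> (\<Inter>x\<in>E. kirch_closure (U x)) \<subseteq> compatible_set E P"
    unfolding compatible_set_eq_INT[of E] by blast
  with B U P(3) show "B \<in> filt E" unfolding filt_def by blast
qed

lemma filt_inf_subset_filt_one_two: "filt_inf \<subseteq> filt {1, 2}"
proof
  fix B assume "B \<in> filt_inf"
  then obtain \<U> where B: "B \<subseteq> {0<..}" and \<U>: "finite \<U>" "\<U> \<noteq> {}" "\<forall>U\<in>\<U>. kirch_open U \<and> U \<noteq> {}"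
    and sub: "(\<Inter>U\<in>\<U>. kirch_closure U) \<subseteq> B"
    unfolding filt_inf_def by blast
  have "\<forall>U\<in>\<U>. \<exists>P. finite P \<and> (\<forall>p\<in>P. prime p) \<and> compatible_set {1, 2} P \<subseteq> kirch_closure U"
  proof
    fix U assume "U \<in> \<U>"
    then obtain x where "kirch_open U" "x \<in> U" using \<U>(3) by blast
    then obtain P where "finite P" "\<forall>p\<in>P. prime p" "compatible_set {x} P \<subseteq> kirch_closure U"
      using kirch_closure_superset_compatible_set[of U x] by blast
    with compatible_set_one_two_subset[of P "{x}"]
    show "\<exists>P. finite P \<and> (\<forall>p\<in>P. prime p) \<and> compatible_set {1, 2} P \<subseteq> kirch_closure U"
      by blast
  qed
  then obtain P where P: "\<forall>U\<in>\<U>. finite (P U) \<and> (\<forall>p\<in>P U. prime p) \<and>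
      compatible_set {1, 2} (P U) \<subseteq> kirch_closure U"
    by (rule bchoice[THEN exE]) blast
  define P' where "P' = (\<Union>U\<in>\<U>. P U)"
  have P': "finite P'" "\<forall>p\<in>P'. prime p" unfolding P'_def using P \<U>(1) by auto
  have "compatible_set {1, 2} P' \<subseteq> kirch_closure U" if "U \<in> \<U>" for U
  proof -
    have "compatible_set {1, 2} P' \<subseteq> compatible_set {1, 2} (P U)"
      unfolding P'_def using that by (intro compatible_set_antimono) auto
    with P that show ?thesis by blast
  qed
  then have "compatible_set {1, 2} P' \<subseteq> B" using sub \<U>(2) by blast
  with B P' show "B \<in> filt {1, 2}" by (subst mem_filt_iff) auto
qed

lemma filt_one_two_subset_filt_inf: "filt {1, 2} \<subseteq> filt_inf"
proof
  fix B assume "B \<in> filt {1, 2}"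
  then obtain P where B: "B \<subseteq> {0<..}" and P: "finite P" "\<forall>p\<in>P. prime p"
    and sub: "compatible_set {1, 2} P \<subseteq> B"
    by (subst (asm) mem_filt_iff) auto
  obtain U1 where U1: "kirch_open U1" "1 \<in> U1" "kirch_closure U1 \<subseteq> compatible_set {1} P"
    using kirch_nbhd_closure_subset_compatible_set[of 1 P] P by auto
  obtain U2 where U2: "kirch_open U2" "2 \<in> U2" "kirch_closure U2 \<subseteq> compatible_set {2} P"
    using kirch_nbhd_closure_subset_compatible_set[of 2 P] P by auto
  have "compatible_set {1, 2} P = compatible_set {1} P \<inter> compatible_set {2} P"
    using compatible_set_Un[of "{1}" "{2}" P, folded insert_is_Un] .
  with U1(3) U2(3) sub have "kirch_closure U1 \<inter> kirch_closure U2 \<subseteq> B"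
    by blast
  with B U1(1,2) U2(1,2) show "B \<in> filt_inf"
    unfolding filt_inf_def by (intro CollectI conjI exI[of _ "{U1, U2}"]) auto
qed

lemma filt_inf_eq_filt_one_two: "filt_inf = filt {1, 2}"
  using filt_inf_subset_filt_one_two filt_one_two_subset_filt_inf by (rule subset_antisym)

lemma exists_pos_cong_and_dvd:
  fixes p y :: nat
  assumes "prime p" "finite Q" "\<forall>q\<in>Q. prime q" "p \<notin> Q"
  shows "\<exists>y'. 0 < y' \<and> [y' = y] (mod p) \<and> (\<forall>q\<in>Q. q dvd y')"
proof -
  have "0 < \<Prod>Q" using assms(3) by (auto intro!: prod_pos simp: prime_gt_0_nat)
  have "coprime p (\<Prod>Q)" using assms by (auto intro!: prod_coprime_right primes_coprime)
  then obtain x where x: "[x = y] (mod p)" "[x = 0] (mod \<Prod>Q)"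
    using binary_chinese_remainder_nat by blast
  have "[x + p * \<Prod>Q = x] (mod p)"
    unfolding cong_add_lcancel_0_nat by (rule cong_mult_self_left)
  then have "[x + p * \<Prod>Q = y] (mod p)" using x(1) by (rule cong_trans)
  moreover have "q dvd x + p * \<Prod>Q" if "q \<in> Q" for q
  proof -
    have "q dvd \<Prod>Q" using that assms(2) by (intro dvd_prodI) auto
    moreover have "\<Prod>Q dvd x" using x(2) by (simp add: cong_0_iff)
    ultimately show ?thesis by (meson dvd_add dvd_mult dvd_trans)
  qed
  moreover have "0 < x + p * \<Prod>Q" using \<open>0 < \<Prod>Q\<close> prime_gt_0_nat[OF assms(1)] by simp
  ultimately show ?thesis by blast
qed

lemma filt_subset_filt_iff:
  assumes "finite E" "E \<subseteq> {0<..}" "finite E'" "E' \<subseteq> {0<..}"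
  shows "filt E \<subseteq> filt E' \<longleftrightarrow>
    (\<forall>p y. prime p \<longrightarrow> compatible_mod E' p y \<longrightarrow> compatible_mod E p y)"
proof
  assume le: "filt E \<subseteq> filt E'"
  show "\<forall>p y. prime p \<longrightarrow> compatible_mod E' p y \<longrightarrow> compatible_mod E p y"
  proof (intro allI impI)
    fix p y assume p: "prime p" and y: "compatible_mod E' p y"
    have "compatible_set E {p} \<in> filt E"
      using p by (subst mem_filt_iff[OF assms(1,2)]) (auto simp: compatible_set_def)
    with le have "compatible_set E {p} \<in> filt E'" by blast
    then obtain P where P: "finite P" "\<forall>q\<in>P. prime q" "compatible_set E' P \<subseteq> compatible_set E {p}"
      unfolding mem_filt_iff[OF assms(3,4)] by blast
    obtain y' where y': "0 < y'" "[y' = y] (mod p)" "\<forall>q\<in>P - {p}. q dvd y'"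
      using exists_pos_cong_and_dvd[OF p, of "P - {p}"] P(1,2) by blast
    have "y' \<in> compatible_set E' P"
      unfolding compatible_set_def
    proof (intro CollectI conjI ballI)
      show "0 < y'" by (rule y'(1))
      fix q assume "q \<in> P"
      show "compatible_mod E' q y'"
      proof (cases "q = p")
        case True
        then show ?thesis using y compatible_mod_cong[OF y'(2)] by simp
      next
        case False
        then show ?thesis using \<open>q \<in> P\<close> y'(3) compatible_mod_dvd by blast
      qed
    qed
    then have "compatible_mod E p y'" using P(3) by (auto simp: compatible_set_def)
    then show "compatible_mod E p y" using compatible_mod_cong[OF y'(2)] by simp
  qed
next
  assume "\<forall>p y. prime p \<longrightarrow> compatible_mod E' p y \<longrightarrow> compatible_mod E p y"
  then have "compatible_set E' P \<subseteq> compatible_set E P" if "\<forall>p\<in>P. prime p" for P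
    using that by (auto simp: compatible_set_def)
  then show "filt E \<subseteq> filt E'"
    unfolding subset_iff mem_filt_iff[OF assms(1,2)] mem_filt_iff[OF assms(3,4)] by blast
qed

section \<open>A_E and Pi_E as local invariants\<close>

lemma prime_eq_two_or_odd: "prime (p::nat) \<Longrightarrow> p = 2 \<or> odd p"
  using primes_dvd_imp_eq two_is_prime_nat by blast

lemma A_E_iff: "p \<in> A_E E \<longleftrightarrow> prime p \<and> (\<exists>y. compatible_mod E p y \<and> \<not> p dvd y)"
proof
  assume "p \<in> A_E E"
  then obtain k where p: "prime p" and k: "\<forall>z\<in>E. p dvd z \<or> z mod p = k mod p"
    unfolding A_E_def by blast
  show "prime p \<and> (\<exists>y. compatible_mod E p y \<and> \<not> p dvd y)"
  proof (cases "p dvd k")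
    case False
    with k have "compatible_mod E p k" by (auto simp: compatible_mod_def cong_def)
    with p False show ?thesis by blast
  next
    case True
    with k have "compatible_mod E p 1" by (auto simp: compatible_mod_def dvd_eq_mod_eq_0)
    with p show ?thesis by auto
  qed
next
  assume "prime p \<and> (\<exists>y. compatible_mod E p y \<and> \<not> p dvd y)"
  then obtain y where p: "prime p" and y: "compatible_mod E p y" "\<not> p dvd y" by blast
  then have "0 < y" by (metis dvd_0_right gr0I)
  with p y show "p \<in> A_E E"
    unfolding A_E_def compatible_mod_def cong_def by (auto intro!: exI[of _ y])
qed

lemma two_in_A_E: "2 \<in> A_E E"
  using compatible_mod_two[of E 1] by (auto simp: A_E_iff intro!: exI[of _ 1])

lemma prime_in_Pi_E_iff: "E \<subseteq> {0<..} \<Longrightarrow> prime p \<Longrightarrow> p \<in> Pi_E E \<longleftrightarrow> (\<forall>x\<in>E. p dvd x)"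
  by (auto simp: Pi_E_def in_prime_factors_iff)

lemma prime_of_mem_Pi_E: "E \<noteq> {} \<Longrightarrow> p \<in> Pi_E E \<Longrightarrow> prime p"
  by (auto simp: Pi_E_def in_prime_factors_iff)

lemma prime_in_Pi_E_imp_in_A_E: "prime p \<Longrightarrow> p \<in> Pi_E E \<Longrightarrow> p \<in> A_E E"
  by (auto simp: Pi_E_def A_E_def in_prime_factors_iff intro!: exI[of _ 1])

lemma odd_prime_in_Pi_E_iff:
  assumes "E \<subseteq> {0<..}" "prime p" "odd p"
  shows "p \<in> Pi_E E \<longleftrightarrow> (\<forall>y. compatible_mod E p y)"
proof
  assume "p \<in> Pi_E E"
  then show "\<forall>y. compatible_mod E p y"
    using prime_in_Pi_E_iff[OF assms(1,2)] by (simp add: compatible_mod_def)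
next
  assume all: "\<forall>y. compatible_mod E p y"
  have "p dvd x" if "x \<in> E" for x
  proof (rule ccontr)
    assume "\<not> p dvd x"
    moreover have "\<not> p dvd 2" using assms(2,3) primes_dvd_imp_eq two_is_prime_nat by blast
    ultimately have "\<not> p dvd x + x" using assms(2) by (simp add: prime_dvd_mult_iff flip: mult_2)
    with all[rule_format, of "x + x"] that have "[x + x = x] (mod p)"
      by (auto simp: compatible_mod_def)
    then have "p dvd x" by (simp add: cong_add_lcancel_0_nat cong_0_iff)
    with \<open>\<not> p dvd x\<close> show False by contradiction
  qed
  then show "p \<in> Pi_E E" using prime_in_Pi_E_iff[OF assms(1,2)] by blast
qed

lemma A_E_common_witness:
  assumes "p \<in> A_E E" "q \<in> A_E E" "p \<noteq> q"
  shows "\<exists>z. \<not> p dvd z \<and> compatible_mod E p z \<and> \<not> q dvd z \<and> compatible_mod E q z"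
proof -
  obtain y1 where p: "prime p" and y1: "compatible_mod E p y1" "\<not> p dvd y1"
    using assms(1) A_E_iff by blast
  obtain y2 where q: "prime q" and y2: "compatible_mod E q y2" "\<not> q dvd y2"
    using assms(2) A_E_iff by blast
  have "coprime p q" using p q assms(3) by (simp add: primes_coprime)
  then obtain z where z: "[z = y1] (mod p)" "[z = y2] (mod q)"
    using binary_chinese_remainder_nat by blast
  have "\<not> p dvd z" "compatible_mod E p z"
    using y1 z(1) compatible_mod_cong cong_dvd_iff by blast+
  moreover have "\<not> q dvd z" "compatible_mod E q z"
    using y2 z(2) compatible_mod_cong cong_dvd_iff by blast+
  ultimately show ?thesis by blast
qed

lemma A_E_antimono:
  assumes "finite E" "E \<subseteq> {0<..}" "finite E'" "E' \<subseteq> {0<..}" "filt E \<subseteq> filt E'"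
  shows "A_E E' \<subseteq> A_E E"
proof
  fix p assume "p \<in> A_E E'"
  then obtain y where "prime p" "compatible_mod E' p y" "\<not> p dvd y" by (auto simp: A_E_iff)
  with assms(5) show "p \<in> A_E E" unfolding filt_subset_filt_iff[OF assms(1-4)] A_E_iff by blast
qed

lemma Pi_E_antimono:
  assumes "finite E" "E \<subseteq> {0<..}" "finite E'" "E' \<subseteq> {0<..}" "filt E \<subseteq> filt E'"
    and "prime p" "odd p" "p \<in> Pi_E E'"
  shows "p \<in> Pi_E E"
  using assms(5-8) unfolding filt_subset_filt_iff[OF assms(1-4)]
    odd_prime_in_Pi_E_iff[OF assms(2,6,7)] odd_prime_in_Pi_E_iff[OF assms(4,6,7)] by blast

lemma A_E_eq_of_filt_eq:
  assumes "finite E" "E \<subseteq> {0<..}" "finite E'" "E' \<subseteq> {0<..}" "filt E = filt E'"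
  shows "A_E E = A_E E'"
  using A_E_antimono[OF assms(1-4)] A_E_antimono[OF assms(3,4,1,2)] assms(5) by blast

lemma filt_eq_filt_inf_iff:
  assumes "finite E" "E \<subseteq> {0<..}"
  shows "filt E = filt_inf \<longleftrightarrow> A_E E \<subseteq> {2}"
proof -
  have one_two: "finite {1::nat, 2}" "{1::nat, 2} \<subseteq> {0<..}" by auto
  have "filt E \<subseteq> filt {1, 2}"
    unfolding filt_subset_filt_iff[OF assms one_two] using compatible_mod_if_one_two by blast
  moreover have "filt {1, 2} \<subseteq> filt E \<longleftrightarrow> A_E E \<subseteq> {2}"
    unfolding filt_subset_filt_iff[OF one_two assms]
  proof
    assume H: "\<forall>p y. prime p \<longrightarrow> compatible_mod E p y \<longrightarrow> compatible_mod {1, 2} p y"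
    show "A_E E \<subseteq> {2}"
    proof
      fix p assume "p \<in> A_E E"
      then obtain y where "prime p" "compatible_mod E p y" "\<not> p dvd y" by (auto simp: A_E_iff)
      with H show "p \<in> {2}" using compatible_mod_one_two_iff by auto
    qed
  next
    assume "A_E E \<subseteq> {2}"
    then have "p = 2 \<or> p dvd y" if "prime p" "compatible_mod E p y" for p y
      using that A_E_iff[of p E] by auto
    then show "\<forall>p y. prime p \<longrightarrow> compatible_mod E p y \<longrightarrow> compatible_mod {1, 2} p y"
      using compatible_mod_one_two_iff by blast
  qed
  ultimately show ?thesis unfolding filt_inf_eq_filt_one_two by blast
qed

lemma compatible_mod_eq_of_refines:
  assumes "x \<in> E" "\<not> p dvd x"
    and refines: "\<And>y. compatible_mod E' p y \<Longrightarrow> compatible_mod E p y"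
    and "compatible_mod E' p y0" "\<not> p dvd y0"
  shows "compatible_mod E' p y \<longleftrightarrow> compatible_mod E p y"
proof
  assume y: "compatible_mod E p y"
  show "compatible_mod E' p y"
  proof (cases "p dvd y")
    case True
    then show ?thesis by (rule compatible_mod_dvd)
  next
    case False
    have "[y0 = x] (mod p)" using assms(1,2,4,5) refines by (auto simp: compatible_mod_def)
    moreover have "[y = x] (mod p)" using assms(1,2) y False by (auto simp: compatible_mod_def)
    ultimately have "[y = y0] (mod p)" by (blast intro: cong_trans cong_sym)
    with assms(4) show ?thesis using compatible_mod_cong by blast
  qed
qed (rule refines)

lemma filt_eq_of_subset:
  assumes E: "finite E" "E \<subseteq> {0<..}" and E': "finite E'" "E' \<subseteq> {0<..}"
    and le: "filt E \<subseteq> filt E'" and A_E: "A_E E \<subseteq> A_E E'"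
    and Pi_E: "\<And>p. prime p \<Longrightarrow> odd p \<Longrightarrow> p \<in> Pi_E E \<Longrightarrow> p \<in> Pi_E E'"
  shows "filt E' = filt E"
proof -
  have refines: "\<And>y. compatible_mod E' p y \<Longrightarrow> compatible_mod E p y" if "prime p" for p
    using le that unfolding filt_subset_filt_iff[OF E E'] by blast
  have "compatible_mod E' p y" if p: "prime p" and y: "compatible_mod E p y" for p y
  proof -
    consider "p = 2" | "p \<notin> A_E E" | "odd p" "p \<in> Pi_E E" | "odd p" "p \<in> A_E E" "p \<notin> Pi_E E"
      using prime_eq_two_or_odd[OF p] by blast
    then show ?thesis
    proof cases
      case 1
      then show ?thesis by (simp add: compatible_mod_two)
    next
      case 2
      then show ?thesis using p y by (auto simp: A_E_iff intro: compatible_mod_dvd)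
    next
      case 3
      then show ?thesis using Pi_E p odd_prime_in_Pi_E_iff[OF E'(2) p] by blast
    next
      case 4
      then obtain x where "x \<in> E" "\<not> p dvd x" using prime_in_Pi_E_iff[OF E(2) p] by blast
      moreover obtain y0 where "compatible_mod E' p y0" "\<not> p dvd y0" using 4 A_E A_E_iff by blast
      ultimately show ?thesis using compatible_mod_eq_of_refines refines[OF p] y by blast
    qed
  qed
  then have "filt E' \<subseteq> filt E" unfolding filt_subset_filt_iff[OF E' E] by blast
  with le show ?thesis by blast
qed

section \<open>Three-term progressions\<close>

definition three_term_progression :: "nat \<Rightarrow> nat \<Rightarrow> nat set" where
  "three_term_progression z m = {z, z + m, z + 2 * m}"

lemma finite_three_term_progression: "finite (three_term_progression z m)"
  by (simp add: three_term_progression_def)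

lemma three_term_progression_pos: "0 < z \<Longrightarrow> three_term_progression z m \<subseteq> {0<..}"
  by (auto simp: three_term_progression_def)

lemma compatible_mod_singleton_cong:
  assumes "[x = x'] (mod p)"
  shows "compatible_mod {x} p y \<longleftrightarrow> compatible_mod {x'} p y"
proof -
  have "p dvd x \<longleftrightarrow> p dvd x'" using assms by (rule cong_dvd_iff)
  moreover have "[y = x] (mod p) \<longleftrightarrow> [y = x'] (mod p)"
    using assms by (meson cong_sym cong_trans)
  ultimately show ?thesis by (simp add: compatible_mod_singleton)
qed

lemma compatible_mod_if_singleton:
  assumes "\<not> p dvd z" "compatible_mod E p z" "compatible_mod {z} p y"
  shows "compatible_mod E p y"
proof (cases "p dvd y")
  case True
  then show ?thesis by (rule compatible_mod_dvd)
next
  case False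
  with assms(1,3) have "[y = z] (mod p)" by (simp add: compatible_mod_singleton)
  with assms(2) show ?thesis using compatible_mod_cong by blast
qed

lemma compatible_mod_three_term_progression_dvd:
  assumes "p dvd m"
  shows "compatible_mod (three_term_progression z m) p y \<longleftrightarrow> compatible_mod {z} p y"
proof -
  have "[z + k * m = z] (mod p)" for k
    using assms by (simp add: cong_add_lcancel_0_nat cong_0_iff)
  then have "compatible_mod {z + k * m} p y \<longleftrightarrow> compatible_mod {z} p y" for k
    by (rule compatible_mod_singleton_cong)
  from this[of 1] this[of 2] show ?thesis
    by (simp add: three_term_progression_def compatible_mod_def)
qed

lemma compatible_mod_three_term_progression_not_dvd:
  assumes "prime p" "odd p" "\<not> p dvd m"
  shows "compatible_mod (three_term_progression z m) p y \<longleftrightarrow> p dvd y"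
proof
  assume compatible: "compatible_mod (three_term_progression z m) p y"
  show "p dvd y"
  proof (rule ccontr)
    assume "\<not> p dvd y"
    then have zero_or_y: "e mod p = 0 \<or> e mod p = y mod p" if "e \<in> three_term_progression z m" for e
      using compatible that by (auto simp: compatible_mod_def cong_def dvd_eq_mod_eq_0)
    have "\<not> p dvd 2" using assms(2) primes_dvd_imp_eq[OF assms(1) two_is_prime_nat] by auto
    then have "\<not> p dvd 2 * m" using assms(1,3) by (simp add: prime_dvd_mult_iff)
    then have "\<not> [z + 2 * m = z] (mod p)" by (simp add: cong_add_lcancel_0_nat cong_0_iff)
    moreover have "\<not> [z + m = z] (mod p)" "\<not> [(z + m) + m = z + m] (mod p)"
      using assms(3) by (simp_all add: cong_add_lcancel_0_nat cong_0_iff)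
    moreover have "z + 2 * m = (z + m) + m" by simp
    moreover have "z mod p = 0 \<or> z mod p = y mod p" "(z + m) mod p = 0 \<or> (z + m) mod p = y mod p"
      "(z + 2 * m) mod p = 0 \<or> (z + 2 * m) mod p = y mod p"
      using zero_or_y by (simp_all add: three_term_progression_def)
    \<comment> \<open>the three terms are pairwise incongruent, yet each is congruent to 0 or to y\<close>
    ultimately show False unfolding cong_def by smt
  qed
qed (rule compatible_mod_dvd)

lemma A_E_three_term_progression:
  "A_E (three_term_progression z m) = insert 2 {q. prime q \<and> q dvd m}"
proof (intro set_eqI iffI)
  fix q assume "q \<in> A_E (three_term_progression z m)"
  then obtain y where q: "prime q" and y: "compatible_mod (three_term_progression z m) q y" "\<not> q dvd y"
    by (auto simp: A_E_iff)
  show "q \<in> insert 2 {q. prime q \<and> q dvd m}"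
  proof (rule ccontr)
    assume "q \<notin> insert 2 {q. prime q \<and> q dvd m}"
    then have "odd q" "\<not> q dvd m" using q prime_eq_two_or_odd by auto
    then show False using y compatible_mod_three_term_progression_not_dvd[OF q] by simp
  qed
next
  fix q assume "q \<in> insert 2 {q. prime q \<and> q dvd m}"
  then consider "q = 2" | "prime q" "q dvd m" by blast
  then show "q \<in> A_E (three_term_progression z m)"
  proof cases
    case 1
    then show ?thesis by (simp add: two_in_A_E)
  next
    case 2
    have "\<exists>y. compatible_mod {z} q y \<and> \<not> q dvd y"
    proof (cases "q dvd z")
      case True
      then show ?thesis using 2(1) by (auto simp: compatible_mod_singleton intro!: exI[of _ 1])
    next
      case False
      then show ?thesis by (auto simp: compatible_mod_singleton intro!: exI[of _ z])
    qed
    with 2 show ?thesis by (simp add: A_E_iff compatible_mod_three_term_progression_dvd)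
  qed
qed

lemma Pi_E_three_term_progression:
  assumes "0 < z" "prime q" "q dvd m"
  shows "q \<in> Pi_E (three_term_progression z m) \<longleftrightarrow> q dvd z"
proof -
  have "q dvd z + m \<longleftrightarrow> q dvd z" "q dvd z + 2 * m \<longleftrightarrow> q dvd z"
    using assms(3) by (simp_all add: dvd_add_left_iff)
  then show ?thesis
    using prime_in_Pi_E_iff[OF three_term_progression_pos[OF assms(1)] assms(2)]
    by (simp add: three_term_progression_def)
qed

lemma filt_subset_filt_three_term_progression:
  assumes "finite E" "E \<subseteq> {0<..}" "0 < z"
    and "\<And>q. prime q \<Longrightarrow> odd q \<Longrightarrow> q dvd m \<Longrightarrow>
      (\<forall>y. compatible_mod E q y) \<or> (\<not> q dvd z \<and> compatible_mod E q z)"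
  shows "filt E \<subseteq> filt (three_term_progression z m)"
  unfolding filt_subset_filt_iff[OF assms(1,2) finite_three_term_progression
      three_term_progression_pos[OF assms(3)]]
proof (intro allI impI)
  fix q y assume q: "prime q" and y: "compatible_mod (three_term_progression z m) q y"
  consider "q = 2" | "odd q" "q dvd m" | "odd q" "\<not> q dvd m" using prime_eq_two_or_odd[OF q] by blast
  then show "compatible_mod E q y"
  proof cases
    case 1
    then show ?thesis by (simp add: compatible_mod_two)
  next
    case 2
    then have "compatible_mod {z} q y" using y by (simp add: compatible_mod_three_term_progression_dvd)
    then show ?thesis using assms(4)[OF q 2] compatible_mod_if_singleton by blast
  next
    case 3
    then show ?thesis
      using q y by (simp add: compatible_mod_three_term_progression_not_dvd compatible_mod_dvd)
  qed
qed

section \<open>The layers F1 and F2\<close>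

lemma filt_in_maximals_iff:
  assumes "filt_inf \<in> X" "finite E" "E \<subseteq> {0<..}"
  shows "filt E \<in> maximals (filt_family - X) \<longleftrightarrow> filt E \<notin> X \<and>
    (\<forall>E'. finite E' \<longrightarrow> E' \<subseteq> {0<..} \<longrightarrow> filt E' \<notin> X \<longrightarrow> filt E \<subseteq> filt E' \<longrightarrow> filt E' = filt E)"
proof -
  have fam: "G \<in> filt_family - X \<longleftrightarrow> (\<exists>E'. finite E' \<and> E' \<subseteq> {0<..} \<and> G = filt E' \<and> G \<notin> X)"
    for G using assms(1) by (auto simp: filt_family_def)
  have "filt E \<in> maximals (filt_family - X) \<longleftrightarrow>
      filt E \<in> filt_family - X \<and> (\<forall>G\<in>filt_family - X. filt E \<subseteq> G \<longrightarrow> G = filt E)"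
    unfolding maximals_def by blast
  also have "filt E \<in> filt_family - X \<longleftrightarrow> filt E \<notin> X"
    using fam assms(2,3) by blast
  also have "(\<forall>G\<in>filt_family - X. filt E \<subseteq> G \<longrightarrow> G = filt E) \<longleftrightarrow>
      (\<forall>E'. finite E' \<longrightarrow> E' \<subseteq> {0<..} \<longrightarrow> filt E' \<notin> X \<longrightarrow> filt E \<subseteq> filt E' \<longrightarrow> filt E' = filt E)"
    unfolding Ball_def fam by blast
  finally show ?thesis .
qed

lemma filt_in_F1_iff_maximal:
  assumes "finite E" "E \<subseteq> {0<..}"
  shows "filt E \<in> F1 \<longleftrightarrow> filt E \<noteq> filt_inf \<and>
    (\<forall>E'. finite E' \<longrightarrow> E' \<subseteq> {0<..} \<longrightarrow> filt E' \<noteq> filt_inf \<longrightarrow>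
      filt E \<subseteq> filt E' \<longrightarrow> filt E' = filt E)"
  using filt_in_maximals_iff[of "{filt_inf}", OF singletonI assms] unfolding F1_def by simp

lemma filt_in_F2_iff:
  assumes "finite E" "E \<subseteq> {0<..}"
  shows "filt E \<in> F2 \<longleftrightarrow> filt E \<notin> F1 \<and> filt E \<noteq> filt_inf \<and>
    (\<forall>E'. finite E' \<longrightarrow> E' \<subseteq> {0<..} \<longrightarrow> filt E' \<notin> F1 \<longrightarrow> filt E' \<noteq> filt_inf \<longrightarrow>
      filt E \<subseteq> filt E' \<longrightarrow> filt E' = filt E)"
proof -
  have top: "filt_inf \<in> F1 \<union> {filt_inf}" by simp
  show ?thesis unfolding filt_in_maximals_iff[OF top assms, folded F2_def] by blast
qed

lemma A_E_Pi_E_if_filt_in_F1: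
  assumes E: "finite E" "E \<subseteq> {0<..}" and "filt E \<in> F1"
  shows "\<exists>p. prime p \<and> odd p \<and> p \<notin> Pi_E E \<and> A_E E = {2, p}"
proof -
  have not_top: "filt E \<noteq> filt_inf" and maximal: "\<And>E'. finite E' \<Longrightarrow> E' \<subseteq> {0<..} \<Longrightarrow>
      filt E' \<noteq> filt_inf \<Longrightarrow> filt E \<subseteq> filt E' \<Longrightarrow> filt E' = filt E"
    using \<open>filt E \<in> F1\<close> filt_in_F1_iff_maximal[OF E] by blast+
  obtain p where "p \<in> A_E E" "p \<noteq> 2" using not_top filt_eq_filt_inf_iff[OF E] by blast
  then obtain y where p: "prime p" "odd p" and y: "compatible_mod E p y" "\<not> p dvd y"
    using prime_eq_two_or_odd by (auto simp: A_E_iff)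
  have "0 < y" using y(2) by (metis dvd_0_right gr0I)
  define V where "V = three_term_progression y p"
  have V: "finite V" "V \<subseteq> {0<..}"
    unfolding V_def using \<open>0 < y\<close> by (simp_all add: finite_three_term_progression three_term_progression_pos)
  have "filt E \<subseteq> filt V"
    unfolding V_def using E \<open>0 < y\<close>
  proof (rule filt_subset_filt_three_term_progression)
    fix q assume "prime q" "odd q" "q dvd p"
    then have "q = p" using p(1) primes_dvd_imp_eq by blast
    then show "(\<forall>y'. compatible_mod E q y') \<or> (\<not> q dvd y \<and> compatible_mod E q y)" using y by blast
  qed
  moreover have A_E_V: "A_E V = {2, p}"
    unfolding V_def A_E_three_term_progression using p(1) primes_dvd_imp_eq[of _ p] by auto
  then have "filt V \<noteq> filt_inf" using filt_eq_filt_inf_iff[OF V] p(2) by auto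
  ultimately have eq: "filt V = filt E" using maximal[OF V] by blast
  have "p \<notin> Pi_E E"
  proof
    assume "p \<in> Pi_E E"
    then have "p \<in> Pi_E V" using Pi_E_antimono[OF V E] eq p(1,2) by blast
    then show False
      using Pi_E_three_term_progression[OF \<open>0 < y\<close> p(1) dvd_refl] y(2) unfolding V_def by simp
  qed
  moreover have "A_E E = {2, p}" using A_E_eq_of_filt_eq[OF V E eq] A_E_V by simp
  ultimately show ?thesis using p by blast
qed

lemma filt_in_F1_if_A_E_Pi_E:
  assumes E: "finite E" "E \<subseteq> {0<..}"
    and p: "prime p" "odd p" "p \<notin> Pi_E E" "A_E E = {2, p}"
  shows "filt E \<in> F1"
proof -
  have "filt E \<noteq> filt_inf" using filt_eq_filt_inf_iff[OF E] p(2,4) by auto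
  moreover have "filt E' = filt E"
    if E': "finite E'" "E' \<subseteq> {0<..}" "filt E' \<noteq> filt_inf" "filt E \<subseteq> filt E'" for E'
  proof (rule filt_eq_of_subset[OF E E'(1,2,4)])
    have "A_E E' \<subseteq> {2, p}" using A_E_antimono[OF E E'(1,2,4)] p(4) by simp
    moreover have "\<not> A_E E' \<subseteq> {2}" using filt_eq_filt_inf_iff[OF E'(1,2)] E'(3) by blast
    ultimately show "A_E E \<subseteq> A_E E'" using p(4) two_in_A_E[of E'] by auto
  next
    fix r assume "prime r" "odd r" "r \<in> Pi_E E"
    moreover from this have "r \<in> {2, p}" using prime_in_Pi_E_imp_in_A_E p(4) by blast
    ultimately show "r \<in> Pi_E E'" using p(3) by auto
  qed
  ultimately show ?thesis using filt_in_F1_iff_maximal[OF E] by blast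
qed

lemma filt_in_F1_iff:
  assumes "finite E" "E \<subseteq> {0<..}"
  shows "filt E \<in> F1 \<longleftrightarrow> (\<exists>p. prime p \<and> odd p \<and> p \<notin> Pi_E E \<and> A_E E = {2, p})"
  using A_E_Pi_E_if_filt_in_F1[OF assms] filt_in_F1_if_A_E_Pi_E[OF assms] by blast

lemma A_E_eq_if_F2_and_odd_prime_in_Pi_E:
  assumes E: "finite E" "E \<subseteq> {0<..}" and "filt E \<in> F2"
    and p: "prime p" "odd p" "p \<in> Pi_E E"
  shows "A_E E = {2, p}"
proof -
  have maximal: "\<And>E'. finite E' \<Longrightarrow> E' \<subseteq> {0<..} \<Longrightarrow> filt E' \<notin> F1 \<Longrightarrow> filt E' \<noteq> filt_inf \<Longrightarrow>
      filt E \<subseteq> filt E' \<Longrightarrow> filt E' = filt E"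
    using \<open>filt E \<in> F2\<close> filt_in_F2_iff[OF E] by blast
  have "0 < p" using p(1) by (rule prime_gt_0_nat)
  define V where "V = three_term_progression p p"
  have V: "finite V" "V \<subseteq> {0<..}"
    unfolding V_def using \<open>0 < p\<close> by (simp_all add: finite_three_term_progression three_term_progression_pos)
  have "filt E \<subseteq> filt V"
    unfolding V_def using E \<open>0 < p\<close>
  proof (rule filt_subset_filt_three_term_progression)
    fix q assume "prime q" "odd q" "q dvd p"
    then have "q = p" using p(1) primes_dvd_imp_eq by blast
    then show "(\<forall>y. compatible_mod E q y) \<or> (\<not> q dvd p \<and> compatible_mod E q p)"
      using odd_prime_in_Pi_E_iff[OF E(2) p(1,2)] p(3) by blast
  qed
  moreover have A_E_V: "A_E V = {2, p}"
    unfolding V_def A_E_three_term_progression using p(1) primes_dvd_imp_eq[of _ p] by auto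
  moreover have "p \<in> Pi_E V"
    unfolding V_def using Pi_E_three_term_progression[OF \<open>0 < p\<close> p(1) dvd_refl] by simp
  then have "filt V \<notin> F1" using filt_in_F1_iff[OF V] A_E_V p(2) by (auto simp: doubleton_eq_iff)
  moreover have "filt V \<noteq> filt_inf" using filt_eq_filt_inf_iff[OF V] A_E_V p(2) by auto
  ultimately have "filt V = filt E" using maximal[OF V] by blast
  with A_E_V show ?thesis using A_E_eq_of_filt_eq[OF V E] by simp
qed

lemma A_E_eq_if_F2_and_Pi_E_subset_two:
  assumes E: "finite E" "E \<subseteq> {0<..}" and "filt E \<in> F2" and "Pi_E E \<subseteq> {2}"
  shows "\<exists>p q. prime p \<and> prime q \<and> odd p \<and> odd q \<and> p \<noteq> q \<and> A_E E = {2, p, q}"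
proof -
  have not_F1: "filt E \<notin> F1" and not_top: "filt E \<noteq> filt_inf"
    and maximal: "\<And>E'. finite E' \<Longrightarrow> E' \<subseteq> {0<..} \<Longrightarrow> filt E' \<notin> F1 \<Longrightarrow> filt E' \<noteq> filt_inf \<Longrightarrow>
      filt E \<subseteq> filt E' \<Longrightarrow> filt E' = filt E"
    using \<open>filt E \<in> F2\<close> filt_in_F2_iff[OF E] by blast+
  obtain p where "p \<in> A_E E" "p \<noteq> 2" using not_top filt_eq_filt_inf_iff[OF E] by blast
  then have p: "prime p" "odd p" using prime_eq_two_or_odd by (auto simp: A_E_iff)
  have "A_E E \<noteq> {2, p}"
    using not_F1 filt_in_F1_iff[OF E] p \<open>Pi_E E \<subseteq> {2}\<close> by auto
  with \<open>p \<in> A_E E\<close> two_in_A_E[of E] obtain q where "q \<in> A_E E" "q \<noteq> 2" "q \<noteq> p" by blast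
  then have q: "prime q" "odd q" using prime_eq_two_or_odd by (auto simp: A_E_iff)
  obtain z where z: "\<not> p dvd z" "compatible_mod E p z" "\<not> q dvd z" "compatible_mod E q z"
    using A_E_common_witness[OF \<open>p \<in> A_E E\<close> \<open>q \<in> A_E E\<close>] \<open>q \<noteq> p\<close> by blast
  have "0 < z" using z(1) by (metis dvd_0_right gr0I)
  have divisors: "{r. prime r \<and> r dvd p * q} = {p, q}"
    using p(1) q(1) by (auto simp: prime_dvd_mult_iff dest: primes_dvd_imp_eq)
  define V where "V = three_term_progression z (p * q)"
  have V: "finite V" "V \<subseteq> {0<..}"
    unfolding V_def using \<open>0 < z\<close> by (simp_all add: finite_three_term_progression three_term_progression_pos)
  have "filt E \<subseteq> filt V"
    unfolding V_def using E \<open>0 < z\<close>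
  proof (rule filt_subset_filt_three_term_progression)
    fix r assume "prime r" "odd r" "r dvd p * q"
    then have "r = p \<or> r = q" using divisors by blast
    then show "(\<forall>y. compatible_mod E r y) \<or> (\<not> r dvd z \<and> compatible_mod E r z)" using z by blast
  qed
  moreover have A_E_V: "A_E V = {2, p, q}" unfolding V_def A_E_three_term_progression divisors by simp
  then have "filt V \<notin> F1"
  proof (intro notI)
    assume "filt V \<in> F1"
    then obtain r where "A_E V = {2, r}" using filt_in_F1_iff[OF V] by blast
    then have "p \<in> {2, r}" "q \<in> {2, r}" using A_E_V by blast+
    then show False using p(2) q(2) \<open>q \<noteq> p\<close> by auto
  qed
  moreover have "filt V \<noteq> filt_inf" using filt_eq_filt_inf_iff[OF V] A_E_V p(2) by auto
  ultimately have "filt V = filt E" using maximal[OF V] by blast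
  then have "A_E E = {2, p, q}" using A_E_eq_of_filt_eq[OF V E] A_E_V by simp
  with p q \<open>q \<noteq> p\<close> show ?thesis by blast
qed

lemma filt_in_F2_if_odd_prime_in_Pi_E:
  assumes E: "finite E" "E \<subseteq> {0<..}"
    and p: "prime p" "odd p" "p \<in> Pi_E E" "A_E E = {2, p}"
  shows "filt E \<in> F2"
proof -
  have "filt E \<notin> F1"
  proof
    assume "filt E \<in> F1"
    then obtain r where "odd r" "r \<notin> Pi_E E" "A_E E = {2, r}" using filt_in_F1_iff[OF E] by blast
    then have "r \<in> {2, p}" using p(4) by blast
    then show False using \<open>odd r\<close> \<open>r \<notin> Pi_E E\<close> p(3) by auto
  qed
  moreover have "filt E \<noteq> filt_inf" using filt_eq_filt_inf_iff[OF E] p(2,4) by auto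
  moreover have "filt E' = filt E"
    if E': "finite E'" "E' \<subseteq> {0<..}" "filt E' \<notin> F1" "filt E' \<noteq> filt_inf" "filt E \<subseteq> filt E'" for E'
  proof (rule filt_eq_of_subset[OF E E'(1,2,5)])
    have "A_E E' \<subseteq> {2, p}" using A_E_antimono[OF E E'(1,2,5)] p(4) by simp
    moreover have "\<not> A_E E' \<subseteq> {2}" using filt_eq_filt_inf_iff[OF E'(1,2)] E'(4) by blast
    ultimately have "p \<in> A_E E'" by blast
    then have A_E': "A_E E' = {2, p}" using \<open>A_E E' \<subseteq> {2, p}\<close> two_in_A_E[of E'] by blast
    then show "A_E E \<subseteq> A_E E'" using p(4) by simp
    fix r assume "prime r" "odd r" "r \<in> Pi_E E"
    then have "r \<in> {2, p}" using prime_in_Pi_E_imp_in_A_E p(4) by blast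
    then have "r = p" using \<open>odd r\<close> by auto
    moreover have "p \<in> Pi_E E'" using E'(3) filt_in_F1_iff[OF E'(1,2)] A_E' p(1,2) by blast
    ultimately show "r \<in> Pi_E E'" by simp
  qed
  ultimately show ?thesis using filt_in_F2_iff[OF E] by blast
qed

lemma filt_in_F2_if_two_odd_primes:
  assumes E: "finite E" "E \<subseteq> {0<..}"
    and pq: "prime p" "prime q" "odd p" "odd q" "p \<noteq> q" "A_E E = {2, p, q}" and "Pi_E E \<subseteq> {2}"
  shows "filt E \<in> F2"
proof -
  have "filt E \<notin> F1"
  proof
    assume "filt E \<in> F1"
    then obtain r where "A_E E = {2, r}" using filt_in_F1_iff[OF E] by blast
    then have "p \<in> {2, r}" "q \<in> {2, r}" using pq(6) by blast+
    then show False using pq(3-5) by auto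
  qed
  moreover have "filt E \<noteq> filt_inf" using filt_eq_filt_inf_iff[OF E] pq(3,6) by auto
  moreover have "filt E' = filt E"
    if E': "finite E'" "E' \<subseteq> {0<..}" "filt E' \<notin> F1" "filt E' \<noteq> filt_inf" "filt E \<subseteq> filt E'" for E'
  proof (rule filt_eq_of_subset[OF E E'(1,2,5)])
    have sub: "A_E E' \<subseteq> {2, p, q}" using A_E_antimono[OF E E'(1,2,5)] pq(6) by simp
    have not_sub: "\<not> A_E E' \<subseteq> {2}" using filt_eq_filt_inf_iff[OF E'(1,2)] E'(4) by blast
    have "A_E E' = {2, p, q}"
    proof (rule ccontr)
      assume ne: "A_E E' \<noteq> {2, p, q}"
      obtain r where r: "r \<in> {p, q}" "A_E E' = {2, r}"
      proof (cases "p \<in> A_E E'")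
        case True
        then have "q \<notin> A_E E'" using ne sub two_in_A_E[of E'] by auto
        then have "A_E E' = {2, p}" using True sub two_in_A_E[of E'] by auto
        then show thesis using that by blast
      next
        case False
        then have "q \<in> A_E E'" using not_sub sub by auto
        then have "A_E E' = {2, q}" using False sub two_in_A_E[of E'] by auto
        then show thesis using that by blast
      qed
      have "prime r" "odd r" using r(1) pq(1-4) by auto
      then have "r \<in> Pi_E E'" using E'(3) filt_in_F1_iff[OF E'(1,2)] r(2) by blast
      then have "r \<in> Pi_E E" using Pi_E_antimono[OF E E'(1,2,5)] \<open>prime r\<close> \<open>odd r\<close> by blast
      then show False using \<open>Pi_E E \<subseteq> {2}\<close> \<open>odd r\<close> by auto
    qed
    then show "A_E E \<subseteq> A_E E'" using pq(6) by simp
    fix r assume "prime r" "odd r" "r \<in> Pi_E E"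
    then show "r \<in> Pi_E E'" using \<open>Pi_E E \<subseteq> {2}\<close> by auto
  qed
  ultimately show ?thesis using filt_in_F2_iff[OF E] by blast
qed

lemma filt_in_F2_if_A_E_Pi_E:
  assumes "finite E" "E \<subseteq> {0<..}"
    and "(\<exists>p. prime p \<and> odd p \<and> p \<in> Pi_E E \<and> A_E E = {2, p}) \<or>
      (\<exists>p q. prime p \<and> prime q \<and> odd p \<and> odd q \<and> p \<noteq> q \<and> A_E E = {2, p, q} \<and> Pi_E E \<subseteq> {2})"
  shows "filt E \<in> F2"
  using assms(3)
proof (elim disjE exE conjE)
  fix p assume "prime p" "odd p" "p \<in> Pi_E E" "A_E E = {2, p}"
  then show ?thesis by (rule filt_in_F2_if_odd_prime_in_Pi_E[OF assms(1,2)])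
next
  fix p q assume "prime p" "prime q" "odd p" "odd q" "p \<noteq> q" "A_E E = {2, p, q}" "Pi_E E \<subseteq> {2}"
  then show ?thesis by (rule filt_in_F2_if_two_odd_primes[OF assms(1,2)])
qed

lemma A_E_Pi_E_if_filt_in_F2:
  assumes "finite E" "E \<noteq> {}" "E \<subseteq> {0<..}" "filt E \<in> F2"
  shows "(\<exists>p. prime p \<and> odd p \<and> p \<in> Pi_E E \<and> A_E E = {2, p}) \<or>
    (\<exists>p q. prime p \<and> prime q \<and> odd p \<and> odd q \<and> p \<noteq> q \<and> A_E E = {2, p, q} \<and> Pi_E E \<subseteq> {2})"
proof (cases "\<exists>p. prime p \<and> odd p \<and> p \<in> Pi_E E")
  case True
  then obtain p where p: "prime p" "odd p" "p \<in> Pi_E E" by blast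
  with A_E_eq_if_F2_and_odd_prime_in_Pi_E[OF assms(1,3,4) p] show ?thesis by blast
next
  case False
  have "Pi_E E \<subseteq> {2}"
  proof
    fix p assume "p \<in> Pi_E E"
    moreover from this have "prime p" by (rule prime_of_mem_Pi_E[OF assms(2)])
    ultimately show "p \<in> {2}" using False prime_eq_two_or_odd by blast
  qed
  with A_E_eq_if_F2_and_Pi_E_subset_two[OF assms(1,3,4)] show ?thesis by blast
qed

theorem lemma3p12:
  fixes E :: "nat set"
  assumes "finite E" and "E \<noteq> {}" and "E \<subseteq> {0<..}"
  shows "filt E \<in> F2 \<longleftrightarrow>
    ((\<exists>p. prime p \<and> odd p \<and> p \<in> Pi_E E \<and> A_E E = {2, p}) \<or>
     (\<exists>p q. prime p \<and> prime q \<and> odd p \<and> odd q \<and> p \<noteq> q \<and>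
            A_E E = {2, p, q} \<and> Pi_E E \<subseteq> {2}))"
  using A_E_Pi_E_if_filt_in_F2[OF assms] filt_in_F2_if_A_E_Pi_E[OF assms(1,3)] by (rule iffI)

end
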